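(* Let $\langle \mathcal{M},\mathcal{R}\rangle$ be a finite reaction network and let $X\subseteq\mathcal{M}$ be a nonempty reactive closed set such that the reactive closed sets contained in $X$ are totally ordered by inclusion, i.e., for any two distinct reactive closed sets $X_1\neq X_2$ with $X_1,X_2\subseteq X$, either $X_1\subset X_2$ or $X_2\subset X_1$. Then there exists a reaction $r\in\mathcal{R}_X$ such that $X=G_{CL}(\mathrm{supp}(r))$.
   Context: A reaction network is a pair $\langle \mathcal{M},\mathcal{R}\rangle$ where $\mathcal{M}$ is a finite set of species and $\mathcal{R}$ is a finite set of reactions, each of the form $\sum_j a_{ij}s_j\to\sum_j b_{ij}s_j$ with $a_{ij},b_{ij}\ge 0$. For a reaction $r$, $\mathrm{supp}(r)=\{s_j: a_{ij}>0\}$ and $\mathrm{prod}(r)=\{s_j: b_{ij}>0\}$; for a set of reactions these denote unions over its reactions. Reactions with empty support (inflows $\emptyset\to s$) are allowed. For $X\subseteq\mathcal{M}$, $\mathcal{R}_X=\{r\in\mathcal{R}:\mathrm{supp}(r)\subseteq X\}$. $X$ is closed if $\mathrm{prod}(\mathcal{R}_X)\subseteq X$. $G_{CL}(Y)$ denotes the smallest closed set containing $Y$. $X$ is reactive if for every $x\in X$ there is $r\in\mathcal{R}_X$ with $x\in\mathrm{supp}(r)\cup\mathrm{prod}(r)$. *)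

theory Defs
  imports Complex_Main
begin

(* A reaction  sum_j a_j s_j -> sum_j b_j s_j  is represented by the pair (a, b) of
   its stoichiometric coefficient functions (species => nonnegative real). *)
type_synonym 'a reaction = "('a \<Rightarrow> real) \<times> ('a \<Rightarrow> real)"

definition supp :: "'a reaction \<Rightarrow> 'a set" where
  "supp r = {s. 0 < fst r s}"

definition prd :: "'a reaction \<Rightarrow> 'a set" where
  "prd r = {s. 0 < snd r s}"

definition prds :: "'a reaction set \<Rightarrow> 'a set" where
  "prds Rs = (\<Union>r\<in>Rs. prd r)"

definition reaction_network :: "'a set \<Rightarrow> 'a reaction set \<Rightarrow> bool" where
  "reaction_network M R \<longleftrightarrow> finite M \<and> finite R \<and>
     (\<forall>r\<in>R. (\<forall>s. 0 \<le> fst r s \<and> 0 \<le> snd r s) \<and> supp r \<subseteq> M \<and> prd r \<subseteq> M)"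

definition reacs :: "'a reaction set \<Rightarrow> 'a set \<Rightarrow> 'a reaction set" where
  "reacs R X = {r \<in> R. supp r \<subseteq> X}"

definition closed :: "'a set \<Rightarrow> 'a reaction set \<Rightarrow> 'a set \<Rightarrow> bool" where
  "closed M R X \<longleftrightarrow> X \<subseteq> M \<and> prds (reacs R X) \<subseteq> X"

definition reactive :: "'a set \<Rightarrow> 'a reaction set \<Rightarrow> 'a set \<Rightarrow> bool" where
  "reactive M R X \<longleftrightarrow> X \<subseteq> M \<and> (\<forall>x\<in>X. \<exists>r\<in>reacs R X. x \<in> supp r \<union> prd r)"

definition G_CL :: "'a set \<Rightarrow> 'a reaction set \<Rightarrow> 'a set \<Rightarrow> 'a set" where
  "G_CL M R Y = \<Inter>{X. closed M R X \<and> Y \<subseteq> X}"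

end

theory Submission
  imports Defs
begin

(* For r in R_X the closures G_CL(supp r) are reactive closed subsets of X, so by hypothesis they
   form a finite nonempty chain, which has a largest member G_CL(supp r0).  Reactivity of X puts
   every species of X into supp r \<union> prd r \<subseteq> G_CL(supp r) for some r in R_X, hence into
   G_CL(supp r0); closedness of X gives the reverse inclusion. *)

lemma reacs_mono: "Y \<subseteq> Z \<Longrightarrow> reacs R Y \<subseteq> reacs R Z"
  unfolding reacs_def by blast

lemma prd_subset_closed: "closed M R Z \<Longrightarrow> r \<in> reacs R Z \<Longrightarrow> prd r \<subseteq> Z"
  unfolding closed_def prds_def by blast

lemma closed_species: "reaction_network M R \<Longrightarrow> closed M R M"
  unfolding closed_def reaction_network_def prds_def reacs_def by blast

lemma subset_G_CL: "Y \<subseteq> G_CL M R Y"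
  unfolding G_CL_def by blast

lemma G_CL_least: "closed M R Z \<Longrightarrow> Y \<subseteq> Z \<Longrightarrow> G_CL M R Y \<subseteq> Z"
  unfolding G_CL_def by blast

lemma G_CL_closed:
  assumes "closed M R M" and "Y \<subseteq> M"
  shows "closed M R (G_CL M R Y)"
proof -
  have "G_CL M R Y \<subseteq> M"
    using assms by (rule G_CL_least)
  moreover have "prds (reacs R (G_CL M R Y)) \<subseteq> Z" if "closed M R Z" "Y \<subseteq> Z" for Z
  proof -
    have "reacs R (G_CL M R Y) \<subseteq> reacs R Z"
      using G_CL_least[OF that] by (rule reacs_mono)
    then show ?thesis
      using that(1) unfolding closed_def prds_def by blast
  qed
  then have "prds (reacs R (G_CL M R Y)) \<subseteq> G_CL M R Y"
    unfolding G_CL_def by blast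
  ultimately show ?thesis
    unfolding closed_def by blast
qed

lemma reaction_in_reacs_G_CL_supp: "r \<in> R \<Longrightarrow> r \<in> reacs R (G_CL M R (supp r))"
  by (simp add: reacs_def subset_G_CL)

lemma supp_prd_subset_G_CL_supp:
  assumes "closed M R M" and "r \<in> R" and "supp r \<subseteq> M"
  shows "supp r \<union> prd r \<subseteq> G_CL M R (supp r)"
proof -
  have "prd r \<subseteq> G_CL M R (supp r)"
    using G_CL_closed[OF assms(1,3)] reaction_in_reacs_G_CL_supp[OF assms(2)]
    by (rule prd_subset_closed)
  then show ?thesis
    using subset_G_CL[of "supp r" M R] by blast
qed

lemma G_CL_supp_reactive:
  assumes M: "closed M R M" and r: "r \<in> R" "supp r \<subseteq> M"
  shows "reactive M R (G_CL M R (supp r))"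
proof -
  let ?G = "G_CL M R (supp r)"
  let ?W = "supp r \<union> prds (reacs R ?G)"
  have G_closed: "closed M R ?G"
    using M r(2) by (rule G_CL_closed)
  have W_sub_G: "?W \<subseteq> ?G"
    using G_closed subset_G_CL[of "supp r" M R] unfolding closed_def by blast
  then have "prds (reacs R ?W) \<subseteq> prds (reacs R ?G)"
    using reacs_mono[of ?W ?G R] unfolding prds_def by blast
  then have "closed M R ?W"
    using W_sub_G G_closed unfolding closed_def by blast
  \<comment> \<open>so the closure consists of supp r and the products of its own reactions only\<close>
  then have "?G \<subseteq> ?W"
    by (rule G_CL_least) blast
  moreover have "\<exists>r'\<in>reacs R ?G. x \<in> supp r' \<union> prd r'" if "x \<in> ?W" for x
    using that reaction_in_reacs_G_CL_supp[OF r(1)] unfolding prds_def by blast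
  ultimately show ?thesis
    using G_closed unfolding reactive_def closed_def by blast
qed

lemma G_CL_supp_reactive_closed:
  assumes "reaction_network M R" and "r \<in> R"
  shows "reactive M R (G_CL M R (supp r)) \<and> closed M R (G_CL M R (supp r))"
proof -
  have "supp r \<subseteq> M"
    using assms unfolding reaction_network_def by blast
  with closed_species[OF assms(1)] show ?thesis
    using assms(2) G_CL_supp_reactive G_CL_closed by blast
qed

theorem lemma2:
  fixes M :: "'a set" and R :: "'a reaction set" and X :: "'a set"
  assumes "reaction_network M R"
    and "X \<subseteq> M" and "X \<noteq> {}"
    and "reactive M R X" and "closed M R X"
    and "\<forall>X1 X2. X1 \<subseteq> X \<and> X2 \<subseteq> X \<and> reactive M R X1 \<and> closed M R X1
            \<and> reactive M R X2 \<and> closed M R X2 \<and> X1 \<noteq> X2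
            \<longrightarrow> X1 \<subset> X2 \<or> X2 \<subset> X1"
  shows "\<exists>r\<in>reacs R X. X = G_CL M R (supp r)"
proof -
  define \<G> where "\<G> = (\<lambda>r. G_CL M R (supp r)) ` reacs R X"
  have G_sub_X: "G \<subseteq> X" if "G \<in> \<G>" for G
    using that G_CL_least[OF assms(5)] unfolding \<G>_def reacs_def by blast
  have G_reactive_closed: "reactive M R G \<and> closed M R G" if "G \<in> \<G>" for G
    using that G_CL_supp_reactive_closed[OF assms(1)] unfolding \<G>_def reacs_def by blast
  have "G1 \<subseteq> G2 \<or> G2 \<subseteq> G1" if "G1 \<in> \<G>" "G2 \<in> \<G>" for G1 G2
    using assms(6)[rule_format, of G1 G2] that G_sub_X G_reactive_closed by blast
  then have "subset.chain UNIV \<G>"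
    unfolding subset.chain_def by blast
  moreover have "finite \<G>"
    using assms(1) unfolding \<G>_def reaction_network_def reacs_def by simp
  moreover have "\<G> \<noteq> {}"
    using assms(3,4) unfolding \<G>_def reactive_def by blast
  ultimately have "\<Union>\<G> \<in> \<G>"
    using Union_in_chain by blast
  moreover have "X \<subseteq> \<Union>\<G>"
  proof
    fix x assume "x \<in> X"
    then obtain r where r: "r \<in> reacs R X" "x \<in> supp r \<union> prd r"
      using assms(4) unfolding reactive_def by blast
    then have "x \<in> G_CL M R (supp r)"
      using supp_prd_subset_G_CL_supp[OF closed_species[OF assms(1)]] assms(2)
      unfolding reacs_def by blast
    with r(1) show "x \<in> \<Union>\<G>"
      unfolding \<G>_def by blast
  qed
  moreover have "\<Union>\<G> \<subseteq> X"
    using G_sub_X by blast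
  ultimately show ?thesis
    unfolding \<G>_def by (metis (no_types, lifting) image_iff subset_antisym)
qed

end
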